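(* Fix a class $k\in\{1,\dots,K\}$ and a test observation $X_i$. Suppose the class-$k$ training feature vectors $X^k_1,\dots,X^k_{n_k}$ and $X_i$ are exchangeable and that $X_i\sim F_k$. Let $C_o(X_i)$ be the oracle MMDCP prediction set at level $\alpha\in(0,1)$. Then $$\mathbb{P}_k\big(k\in C_o(X_i)\big)\ge 1-\alpha .$$
   Context: Labeled training data $\{(Y_i,X_i)\}_{i=1}^n$ with $Y_i\in\{1,\dots,K\}$, $X_i\in\mathbb{R}^p$; $n_k=\#\{i\le n:Y_i=k\}$ and $X^k_1,\dots,X^k_{n_k}$ are the class-$k$ training feature vectors. Test observations are $X_{n+1},\dots,X_{n+m}$. $F_k$ is the class-$k$ feature distribution with mean $\mu_k$ and positive definite covariance $\Sigma_k$. Oracle score: $s_{ok}(x)=\|(\mathrm{diag}(\Sigma_k))^{-1/2}(x-\mu_k)\|_2^2$. Oracle conformal $p$-value: $p^i_{ok}=\big(1+\sum_{l=1}^{n_k}\mathbb{1}\{s_{ok}(X_i)\le s_{ok}(X^k_l)\}\big)/(n_k+1)$. Oracle MMDCP: for each $k$, if $m=1$, the test point is accepted for class $k$ iff $p^i_{ok}>\lfloor (n_k+1)\alpha\rfloor/(n_k+1)$; if $m>1$, the Benjamini–Hochberg adjusted $p$-values $\tilde p^i_{ok}$ of $\{p^i_{ok}\}_{i=n+1}^{n+m}$ are computed (if $p_{(1)}\le\dots\le p_{(m)}$ are the ordered values, the adjusted value of $p_{(j)}$ is $\min\{1,\min_{l\ge j} m\,p_{(l)}/l\}$), and $X_i$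 is accepted for class $k$ iff $\tilde p^i_{ok}>\lfloor (n_k+1)\alpha\rfloor/(n_k+1)$. The prediction set is $C_o(X_i)=\{k: X_i \text{ accepted for class } k\}$. $\mathbb{P}_k$ denotes probability under the joint law of the data when $X_i\sim F_k$. *)

theory Defs
  imports "HOL-Probability.Probability"
begin

definition oracle_score :: "real^'p \<Rightarrow> real^'p^'p \<Rightarrow> real^'p \<Rightarrow> real" where
  "oracle_score mu Sig x = (norm (\<chi> j. (x$j - mu$j) / sqrt (Sig$j$j)))^2"

definition conf_pval :: "(real^'p \<Rightarrow> real) \<Rightarrow> nat \<Rightarrow> (nat \<Rightarrow> real^'p) \<Rightarrow> real^'p \<Rightarrow> real" where
  "conf_pval s nk cal x =
     (1 + real (card {l \<in> {1..nk}. s x \<le> s (cal l)})) / (real nk + 1)"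

text \<open>Benjamini-Hochberg adjusted p-value of test index i among p 1, ..., p m:
  with ordered values ps!0 <= ... <= ps!(m-1) (i.e. p_(1),...,p_(m)), and p i = p_(j),
  the adjusted value is min{1, min_{l >= j} m p_(l) / l}.  (For ties the value does not
  depend on which position j is chosen; we take the least one.)\<close>
definition bh_adjusted :: "nat \<Rightarrow> (nat \<Rightarrow> real) \<Rightarrow> nat \<Rightarrow> real" where
  "bh_adjusted m p i =
     (let ps = sort (map p [1..<m+1]);
          j = (LEAST j. 1 \<le> j \<and> j \<le> m \<and> ps ! (j - 1) = p i)
      in min 1 (Min ((\<lambda>l. real m * ps ! (l - 1) / real l) ` {j..m})))"

definition mmdcp_accept :: "real \<Rightarrow> nat \<Rightarrow> nat \<Rightarrow> (nat \<Rightarrow> real) \<Rightarrow> nat \<Rightarrow> bool" where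
  "mmdcp_accept \<alpha> nk m pv i =
     (let thr = real_of_int \<lfloor>(real nk + 1) * \<alpha>\<rfloor> / (real nk + 1)
      in if m = 1 then pv i > thr else bh_adjusted m pv i > thr)"

definition oracle_pred_set ::
  "nat \<Rightarrow> real \<Rightarrow> (nat \<Rightarrow> real^'p) \<Rightarrow> (nat \<Rightarrow> real^'p^'p) \<Rightarrow> (nat \<Rightarrow> nat)
   \<Rightarrow> (nat \<Rightarrow> nat \<Rightarrow> real^'p) \<Rightarrow> nat \<Rightarrow> (nat \<Rightarrow> real^'p) \<Rightarrow> nat \<Rightarrow> nat set" where
  "oracle_pred_set K \<alpha> mu Sig ncnt Xtr m Xte i =
     {c \<in> {1..K}. mmdcp_accept \<alpha> (ncnt c) m
        (\<lambda>j. conf_pval (oracle_score (mu c) (Sig c)) (ncnt c) (Xtr c) (Xte j)) i}"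

definition exchangeable :: "'a measure \<Rightarrow> nat \<Rightarrow> (nat \<Rightarrow> 'a \<Rightarrow> 'b::topological_space) \<Rightarrow> bool" where
  "exchangeable M N Z \<longleftrightarrow>
     (\<forall>\<pi>. \<pi> permutes {..<N} \<longrightarrow>
        distr M (PiM {..<N} (\<lambda>_. borel)) (\<lambda>\<omega>. restrict (\<lambda>l. Z (\<pi> l) \<omega>) {..<N})
        = distr M (PiM {..<N} (\<lambda>_. borel)) (\<lambda>\<omega>. restrict (\<lambda>l. Z l \<omega>) {..<N}))"

end

theory Submission
  imports Defs
begin

text \<open>Put the n class-k training points and the test point in a row Z 0, ..., Z n.
  For any t, the event that Z j is weakly outscored by fewer than t of the others has the
  same probability for every j, by exchangeability; and at most t indices can satisfy it at
  once (consider the lowest-scoring one among them). So each such event has probability at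
  most t / (n + 1). For the test point and t = floor((n + 1) alpha) this event is exactly
  that its conformal p-value is at most the MMDCP threshold. Benjamini-Hochberg adjustment
  never decreases a p-value in [0, 1], so otherwise class k is accepted.\<close>

lemma card_low_rank_le:
  fixes v :: "'b \<Rightarrow> 'c::linorder"
  assumes "finite L"
  shows "card {j\<in>L. card {l\<in>L-{j}. v j \<le> v l} < t} \<le> t"
proof (rule ccontr)
  define S where "S = {j\<in>L. card {l\<in>L-{j}. v j \<le> v l} < t}"
  assume "\<not> card S \<le> t"
  then have "t < card S" by simp
  then have "finite S" "S \<noteq> {}" by (auto intro: card_ge_0_finite)
  then obtain j where "j \<in> S" and j_min: "v j = Min (v ` S)"
    by (metis (no_types, lifting) Min_in finite_imageI image_iff image_is_empty)
  have "S - {j} \<subseteq> {l\<in>L-{j}. v j \<le> v l}"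
    using j_min \<open>finite S\<close> by (auto simp: S_def)
  then have "card (S - {j}) \<le> card {l\<in>L-{j}. v j \<le> v l}"
    using assms by (intro card_mono) auto
  then have "card S - 1 \<le> card {l\<in>L-{j}. v j \<le> v l}"
    using \<open>j \<in> S\<close> \<open>finite S\<close> by simp
  moreover have "card {l\<in>L-{j}. v j \<le> v l} < t"
    using \<open>j \<in> S\<close> by (simp add: S_def)
  ultimately show False
    using \<open>t < card S\<close> by linarith
qed

lemma card_remove_permutes:
  assumes "\<pi> permutes A" "j \<in> A"
  shows "card {l\<in>A-{j}. P (\<pi> l)} = card {l\<in>A-{\<pi> j}. P l}"
proof -
  have inj: "inj \<pi>"
    using assms(1) by (rule permutes_inj)
  have "\<pi> ` {l\<in>A-{j}. P (\<pi> l)} = {l\<in>A-{\<pi> j}. P l}"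
  proof (intro equalityI subsetI)
    fix x assume "x \<in> \<pi> ` {l\<in>A-{j}. P (\<pi> l)}"
    then show "x \<in> {l\<in>A-{\<pi> j}. P l}"
      using assms inj by (auto simp: permutes_in_image inj_eq)
  next
    fix x assume x: "x \<in> {l\<in>A-{\<pi> j}. P l}"
    have "\<pi> (inv \<pi> x) = x"
      using permutes_inverses(1)[OF assms(1)] .
    moreover have "inv \<pi> x \<in> A"
      using x assms(1) by (simp add: permutes_inv permutes_in_image)
    ultimately show "x \<in> \<pi> ` {l\<in>A-{j}. P (\<pi> l)}"
      using x by (intro image_eqI[of x \<pi> "inv \<pi> x"]) auto
  qed
  then show ?thesis
    using inj by (metis card_image inj_on_subset subset_UNIV)
qed

lemma (in prob_space) prob_le_of_equiprobable_events:
  fixes N t :: nat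
  assumes "0 < N"
    and "\<And>j. j < N \<Longrightarrow> B j \<in> events"
    and "\<And>j. j < N \<Longrightarrow> prob (B j) = p"
    and "\<And>\<omega>. \<omega> \<in> space M \<Longrightarrow> card {j\<in>{..<N}. \<omega> \<in> B j} \<le> t"
  shows "p \<le> t / N"
proof -
  have integrable: "integrable M (indicator (B j) :: 'a \<Rightarrow> real)" if "j < N" for j
    using assms(2)[OF that] by (simp add: less_top[symmetric])
  have "real N * p = (\<Sum>j<N. prob (B j))"
    using assms(3) by simp
  also have "\<dots> = expectation (\<lambda>\<omega>. \<Sum>j<N. indicator (B j) \<omega>)"
    using assms(2) integrable by (simp add: Bochner_Integration.integral_sum Int_absorb2 sets.sets_into_space)
  also have "\<dots> \<le> t"
  proof (rule integral_le_const)
    show "integrable M (\<lambda>\<omega>. \<Sum>j<N. indicator (B j) \<omega> :: real)"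
      using integrable by auto
    show "AE \<omega> in M. (\<Sum>j<N. indicator (B j) \<omega> :: real) \<le> t"
      using assms(4) by (auto simp: indicator_def sum.If_cases Int_def)
  qed
  finally show ?thesis
    using assms(1) by (simp add: field_simps)
qed

lemma sets_Collect_finite_valued:
  fixes g :: "nat \<Rightarrow> 'a \<Rightarrow> real"
  assumes "finite I" "finite V"
    and "\<And>j. j \<in> I \<Longrightarrow> g j \<in> borel_measurable M"
    and "\<And>j \<omega>. j \<in> I \<Longrightarrow> \<omega> \<in> space M \<Longrightarrow> g j \<omega> \<in> V"
    and "\<And>f f'. (\<And>j. j \<in> I \<Longrightarrow> f j = f' j) \<Longrightarrow> Q f = Q f'"
  shows "{\<omega>\<in>space M. Q (\<lambda>j. g j \<omega>)} \<in> sets M"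
proof -
  have "{\<omega>\<in>space M. Q (\<lambda>j. g j \<omega>)}
      = (\<Union>f\<in>{f\<in>PiE I (\<lambda>_. V). Q f}. {\<omega>\<in>space M. \<forall>j\<in>I. g j \<omega> = f j})"
  proof (intro equalityI subsetI)
    fix \<omega> assume \<omega>: "\<omega> \<in> {\<omega>\<in>space M. Q (\<lambda>j. g j \<omega>)}"
    then have "restrict (\<lambda>j. g j \<omega>) I \<in> {f\<in>PiE I (\<lambda>_. V). Q f}"
      using assms(4) assms(5)[of "restrict (\<lambda>j. g j \<omega>) I" "\<lambda>j. g j \<omega>"] by auto
    with \<omega> show "\<omega> \<in> (\<Union>f\<in>{f\<in>PiE I (\<lambda>_. V). Q f}. {\<omega>\<in>space M. \<forall>j\<in>I. g j \<omega> = f j})"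
      by (intro UN_I[of "restrict (\<lambda>j. g j \<omega>) I"]) auto
  next
    fix \<omega> assume "\<omega> \<in> (\<Union>f\<in>{f\<in>PiE I (\<lambda>_. V). Q f}. {\<omega>\<in>space M. \<forall>j\<in>I. g j \<omega> = f j})"
    then show "\<omega> \<in> {\<omega>\<in>space M. Q (\<lambda>j. g j \<omega>)}"
      using assms(5) by fastforce
  qed
  also have "\<dots> \<in> sets M"
  proof (rule sets.finite_UN)
    show "finite {f\<in>PiE I (\<lambda>_. V). Q f}"
      using assms(1,2) by (simp add: finite_PiE)
    show "{\<omega>\<in>space M. \<forall>j\<in>I. g j \<omega> = f j} \<in> sets M" for f
      using assms(1,3) by measurable
  qed
  finally show ?thesis .
qed

lemma exchangeable_measure_permuted_eq:
  fixes Z :: "nat \<Rightarrow> 'a \<Rightarrow> 'b::topological_space"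
  assumes "exchangeable M N Z" "\<pi> permutes {..<N}"
    and "\<And>l. Z l \<in> borel_measurable M"
    and "S \<in> sets (PiM {..<N} (\<lambda>_. borel))"
  shows "measure M {\<omega>\<in>space M. restrict (\<lambda>l. Z (\<pi> l) \<omega>) {..<N} \<in> S}
       = measure M {\<omega>\<in>space M. restrict (\<lambda>l. Z l \<omega>) {..<N} \<in> S}"
proof -
  have m1: "(\<lambda>\<omega>. restrict (\<lambda>l. Z (\<pi> l) \<omega>) {..<N}) \<in> M \<rightarrow>\<^sub>M PiM {..<N} (\<lambda>_. borel)"
    and m2: "(\<lambda>\<omega>. restrict (\<lambda>l. Z l \<omega>) {..<N}) \<in> M \<rightarrow>\<^sub>M PiM {..<N} (\<lambda>_. borel)"
    using assms(3) by (auto intro!: measurable_restrict)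
  have "measure M {\<omega>\<in>space M. restrict (\<lambda>l. Z (\<pi> l) \<omega>) {..<N} \<in> S}
      = measure (distr M (PiM {..<N} (\<lambda>_. borel)) (\<lambda>\<omega>. restrict (\<lambda>l. Z (\<pi> l) \<omega>) {..<N})) S"
    using measure_distr[OF m1 assms(4)] by (simp add: vimage_def Int_def conj_commute)
  also have "\<dots> = measure (distr M (PiM {..<N} (\<lambda>_. borel)) (\<lambda>\<omega>. restrict (\<lambda>l. Z l \<omega>) {..<N})) S"
    using assms(1,2) unfolding exchangeable_def by simp
  also have "\<dots> = measure M {\<omega>\<in>space M. restrict (\<lambda>l. Z l \<omega>) {..<N} \<in> S}"
    using measure_distr[OF m2 assms(4)] by (simp add: vimage_def Int_def conj_commute)
  finally show ?thesis .
qed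

lemma measurable_card_score_ge:
  fixes s :: "'b::topological_space \<Rightarrow> real" and N :: nat
  assumes "s \<in> borel_measurable borel" "j < N"
  shows "(\<lambda>z. card {l\<in>{..<N}-{j}. s (z j) \<le> s (z l)}) \<in> PiM {..<N} (\<lambda>_. borel) \<rightarrow>\<^sub>M count_space UNIV"
proof (rule measurable_card)
  have score_component: "(\<lambda>z. s (z l)) \<in> borel_measurable (PiM {..<N} (\<lambda>_. borel))" if "l < N" for l
    using that
    by (intro measurable_compose[OF measurable_component_singleton[of l _ "\<lambda>_. borel"] assms(1)]) simp
  fix l
  show "{z \<in> space (PiM {..<N} (\<lambda>_. borel)). l \<in> {l\<in>{..<N}-{j}. s (z j) \<le> s (z l)}} \<in> sets (PiM {..<N} (\<lambda>_. borel))"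
  proof (cases "l < N \<and> l \<noteq> j")
    case True
    then have "{z \<in> space (PiM {..<N} (\<lambda>_. borel)). l \<in> {l\<in>{..<N}-{j}. s (z j) \<le> s (z l)}}
        = {z \<in> space (PiM {..<N} (\<lambda>_. borel)). s (z j) \<le> s (z l)}"
      by blast
    also have "\<dots> \<in> sets (PiM {..<N} (\<lambda>_. borel))"
      using True assms(2) by (intro borel_measurable_le score_component) simp_all
    finally show ?thesis .
  next
    case False
    then have "{z \<in> space (PiM {..<N} (\<lambda>_. borel)). l \<in> {l\<in>{..<N}-{j}. s (z j) \<le> s (z l)}} = {}"
      by blast
    then show ?thesis
      by (simp only: sets.empty_sets)
  qed
qed

lemma exchangeable_rank_event_measure_eq:
  fixes Z :: "nat \<Rightarrow> 'a \<Rightarrow> 'b::topological_space" and s :: "'b \<Rightarrow> real"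
  assumes "exchangeable M N Z" and "\<And>l. Z l \<in> borel_measurable M"
    and "s \<in> borel_measurable borel" and "j < N" and "j' < N"
  shows "measure M {\<omega>\<in>space M. card {l\<in>{..<N}-{j'}. s (Z j' \<omega>) \<le> s (Z l \<omega>)} < t}
       = measure M {\<omega>\<in>space M. card {l\<in>{..<N}-{j}. s (Z j \<omega>) \<le> s (Z l \<omega>)} < t}"
proof -
  define low where "low z i \<longleftrightarrow> card {l\<in>{..<N}-{i}. s (z i) \<le> s (z l)} < t"
    for z :: "nat \<Rightarrow> 'b" and i
  define S where "S = {z \<in> space (PiM {..<N} (\<lambda>_. borel)). low z j}"
  have S_sets: "S \<in> sets (PiM {..<N} (\<lambda>_. borel))"
    using measurable_card_score_ge[OF assms(3,4)] unfolding S_def low_def by measurable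
  have event_permuted: "{\<omega>\<in>space M. low (\<lambda>l. Z l \<omega>) (\<pi> j)}
      = {\<omega>\<in>space M. restrict (\<lambda>l. Z (\<pi> l) \<omega>) {..<N} \<in> S}"
    if "\<pi> permutes {..<N}" for \<pi>
  proof -
    have "low (restrict (\<lambda>l. Z (\<pi> l) \<omega>) {..<N}) j = low (\<lambda>l. Z l \<omega>) (\<pi> j)" for \<omega>
    proof -
      have "{l\<in>{..<N}-{j}. s (restrict (\<lambda>l. Z (\<pi> l) \<omega>) {..<N} j) \<le> s (restrict (\<lambda>l. Z (\<pi> l) \<omega>) {..<N} l)}
          = {l\<in>{..<N}-{j}. s (Z (\<pi> j) \<omega>) \<le> s (Z (\<pi> l) \<omega>)}"
        using assms(4) by (simp cong: conj_cong)
      then show ?thesis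
        unfolding low_def
        using card_remove_permutes[OF that, of j "\<lambda>l. s (Z (\<pi> j) \<omega>) \<le> s (Z l \<omega>)"] assms(4)
        by simp
    qed
    moreover have "restrict (\<lambda>l. Z (\<pi> l) \<omega>) {..<N} \<in> space (PiM {..<N} (\<lambda>_. borel))" for \<omega>
      by (simp add: space_PiM)
    ultimately show ?thesis
      unfolding S_def by blast
  qed
  define \<pi> where "\<pi> = Transposition.transpose j' j"
  have \<pi>: "\<pi> permutes {..<N}" "\<pi> j = j'"
    using assms(4,5) by (simp_all add: \<pi>_def permutes_swap_id)
  show ?thesis
    using event_permuted[OF \<pi>(1)] event_permuted[OF permutes_id] \<pi>(2)
      exchangeable_measure_permuted_eq[OF assms(1) \<pi>(1) assms(2) S_sets]
    unfolding low_def by simp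
qed

lemma exchangeable_rank_prob_le:
  fixes Z :: "nat \<Rightarrow> 'a \<Rightarrow> 'b::topological_space" and s :: "'b \<Rightarrow> real"
  assumes "prob_space M" "exchangeable M N Z"
    and "\<And>l. Z l \<in> borel_measurable M" and "s \<in> borel_measurable borel"
    and "j < N"
  shows "measure M {\<omega>\<in>space M. card {l\<in>{..<N}-{j}. s (Z j \<omega>) \<le> s (Z l \<omega>)} < t} \<le> t / N"
proof -
  interpret prob_space M by fact
  define B where "B i = {\<omega>\<in>space M. card {l\<in>{..<N}-{i}. s (Z i \<omega>) \<le> s (Z l \<omega>)} < t}" for i
  note [measurable] = assms(3,4)
  have B_events: "B i \<in> events" for i
    unfolding B_def by measurable
  have equiprobable: "prob (B i) = prob (B j)" if "i < N" for i
    unfolding B_def using assms(2-5) that by (rule exchangeable_rank_event_measure_eq)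
  have few_low: "card {i\<in>{..<N}. \<omega> \<in> B i} \<le> t" if "\<omega> \<in> space M" for \<omega>
    using card_low_rank_le[of "{..<N}" "\<lambda>l. s (Z l \<omega>)" t] that
    unfolding B_def by simp
  have "prob (B j) \<le> t / N"
  proof (rule prob_le_of_equiprobable_events[where B = B])
    show "0 < N"
      using assms(5) by simp
  qed (use B_events equiprobable few_low in blast)+
  then show ?thesis
    unfolding B_def .
qed

lemma continuous_on_oracle_score: "continuous_on UNIV (oracle_score mu Sig)"
  unfolding oracle_score_def divide_inverse
  by (intro continuous_intros continuous_on_vec_lambda)

lemma borel_measurable_oracle_score [measurable]: "oracle_score mu Sig \<in> borel_measurable borel"
  using continuous_on_oracle_score by (rule borel_measurable_continuous_onI)

lemma conf_pval_shifted_eq: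
  fixes n :: nat and cal :: "nat \<Rightarrow> real^'p" and x :: "real^'p"
  defines "z \<equiv> \<lambda>l. if l < n then cal (Suc l) else x"
  shows "conf_pval s n cal x = (1 + real (card {l\<in>{..<n+1}-{n}. s (z n) \<le> s (z l)})) / (real n + 1)"
proof -
  have "{l\<in>{1..n}. s x \<le> s (cal l)} = Suc ` {l\<in>{..<n+1}-{n}. s (z n) \<le> s (z l)}"
  proof (intro equalityI subsetI)
    fix l assume "l \<in> {l\<in>{1..n}. s x \<le> s (cal l)}"
    then show "l \<in> Suc ` {l\<in>{..<n+1}-{n}. s (z n) \<le> s (z l)}"
      by (intro image_eqI[of l Suc "l - 1"]) (auto simp: z_def)
  qed (auto simp: z_def)
  then show ?thesis
    unfolding conf_pval_def by (simp add: card_image)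
qed

lemma conf_pval_in_grid:
  "conf_pval s n cal x \<in> (\<lambda>c. (1 + real c) / (real n + 1)) ` {..n}"
proof -
  have "card {l\<in>{1..n}. s x \<le> s (cal l)} \<le> card {1..n}"
    by (rule card_mono) auto
  then show ?thesis
    unfolding conf_pval_def by simp
qed

lemma conf_pval_bounds:
  "0 \<le> conf_pval s n cal x" "conf_pval s n cal x \<le> 1"
  using conf_pval_in_grid[of s n cal x] by auto

lemma borel_measurable_conf_pval [measurable]:
  assumes [measurable]: "s \<in> borel_measurable borel"
    "\<And>l. cal l \<in> borel_measurable M" "X \<in> borel_measurable M"
  shows "(\<lambda>\<omega>. conf_pval s n (\<lambda>l. cal l \<omega>) (X \<omega>)) \<in> borel_measurable M"
  unfolding conf_pval_def by measurable

lemma conf_pval_valid: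
  assumes "prob_space M" "0 \<le> \<alpha>"
    and "exchangeable M (n + 1) (\<lambda>l. if l < n then cal (Suc l) else X)"
    and "\<And>l. cal l \<in> borel_measurable M" "X \<in> borel_measurable M"
    and "s \<in> borel_measurable borel"
  shows "measure M {\<omega>\<in>space M.
           conf_pval s n (\<lambda>l. cal l \<omega>) (X \<omega>) \<le> \<lfloor>(real n + 1) * \<alpha>\<rfloor> / (real n + 1)} \<le> \<alpha>"
proof -
  define Z where "Z = (\<lambda>l. if l < n then cal (Suc l) else X)"
  define t where "t = nat \<lfloor>(real n + 1) * \<alpha>\<rfloor>"
  have Z_apply: "Z l \<omega> = (if l < n then cal (Suc l) \<omega> else X \<omega>)" for l \<omega>
    by (simp add: Z_def)
  have "c < t \<longleftrightarrow> 1 + real c \<le> real_of_int \<lfloor>(real n + 1) * \<alpha>\<rfloor>" for c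
    using assms(2) by (simp add: t_def zless_nat_eq_int_zless) linarith
  then have pval_le_iff: "conf_pval s n (\<lambda>l. cal l \<omega>) (X \<omega>) \<le> \<lfloor>(real n + 1) * \<alpha>\<rfloor> / (real n + 1)
      \<longleftrightarrow> card {l\<in>{..<n+1}-{n}. s (Z n \<omega>) \<le> s (Z l \<omega>)} < t" for \<omega>
    by (simp add: conf_pval_shifted_eq Z_apply divide_le_cancel add_pos_nonneg)
  have Z_measurable: "Z l \<in> borel_measurable M" for l
    unfolding Z_def using assms(4,5) by simp
  have "real t \<le> (real n + 1) * \<alpha>"
    using assms(2) by (simp add: t_def)
  then have "real t / real (n + 1) \<le> \<alpha>"
    by (simp add: divide_le_eq algebra_simps)
  moreover have "measure M {\<omega>\<in>space M. card {l\<in>{..<n+1}-{n}. s (Z n \<omega>) \<le> s (Z l \<omega>)} < t}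
      \<le> real t / real (n + 1)"
    using assms(3) unfolding Z_def[symmetric]
    by (rule exchangeable_rank_prob_le[OF assms(1) _ Z_measurable assms(6)]) simp
  ultimately show ?thesis
    using pval_le_iff by simp
qed

lemma bh_adjusted_ge:
  assumes "i \<in> {1..m}" and "\<And>j. j \<in> {1..m} \<Longrightarrow> 0 \<le> p j" and "p i \<le> 1"
  shows "p i \<le> bh_adjusted m p i"
proof -
  define ps where "ps = sort (map p [1..<m+1])"
  have len: "length ps = m" and sorted: "sorted ps" and set_ps: "set ps = p ` {1..m}"
    by (auto simp: ps_def)
  then obtain n where n: "n < m" "ps ! n = p i"
    using assms(1) by (metis imageI in_set_conv_nth)
  define J where "J = (LEAST j. 1 \<le> j \<and> j \<le> m \<and> ps ! (j - 1) = p i)"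
  have J: "1 \<le> J" "J \<le> m" "ps ! (J - 1) = p i"
    using LeastI[of "\<lambda>j. 1 \<le> j \<and> j \<le> m \<and> ps ! (j - 1) = p i" "n + 1"] n
    unfolding J_def by auto
  have "p i \<le> real m * ps ! (l - 1) / real l" if l: "l \<in> {J..m}" for l
  proof -
    have index: "J - 1 \<le> l - 1" "l - 1 < length ps"
      using l J len by auto
    then have "p i \<le> ps ! (l - 1)"
      using sorted_nth_mono[OF sorted] J(3) by metis
    moreover have "0 \<le> ps ! (l - 1)"
      using nth_mem[OF index(2)] set_ps assms(2) by auto
    moreover have "real l \<le> real m" "0 < real l"
      using l J by auto
    ultimately have "p i * real l \<le> ps ! (l - 1) * real m"
      by (intro mult_mono) auto
    then show ?thesis
      using \<open>0 < real l\<close> by (simp add: le_divide_eq mult.commute)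
  qed
  then have "p i \<le> Min ((\<lambda>l. real m * ps ! (l - 1) / real l) ` {J..m})"
    using J by (subst Min_ge_iff) auto
  then show ?thesis
    using assms(3) unfolding bh_adjusted_def Let_def ps_def[symmetric] J_def[symmetric] by simp
qed

lemma mmdcp_accept_cong:
  assumes "i \<in> {1..m}" and "\<And>j. j \<in> {1..m} \<Longrightarrow> p j = q j"
  shows "mmdcp_accept \<alpha> nk m p i = mmdcp_accept \<alpha> nk m q i"
proof -
  have "map p [1..<m+1] = map q [1..<m+1]" and "p i = q i"
    using assms by auto
  then show ?thesis
    unfolding mmdcp_accept_def bh_adjusted_def Let_def by (simp only:)
qed

lemma mmdcp_accept_if_conf_pval_gt:
  assumes "i \<in> {1..m}"
    and "real_of_int \<lfloor>(real n + 1) * \<alpha>\<rfloor> / (real n + 1) < conf_pval s n cal (X i)"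
  shows "mmdcp_accept \<alpha> n m (\<lambda>j. conf_pval s n cal (X j)) i"
  using bh_adjusted_ge[of i m "\<lambda>j. conf_pval s n cal (X j)"] assms
  unfolding mmdcp_accept_def Let_def by (auto simp: conf_pval_bounds)

text \<open>The adjusted p-value sorts its arguments, so measurability of acceptance comes from
  the finite range of the p-values instead.\<close>

lemma sets_mmdcp_accept_conf_pval:
  assumes "i \<in> {1..m}" and "s \<in> borel_measurable borel"
    and "\<And>l. cal l \<in> borel_measurable M" and "\<And>j. X j \<in> borel_measurable M"
  shows "{\<omega>\<in>space M. mmdcp_accept \<alpha> n m (\<lambda>j. conf_pval s n (\<lambda>l. cal l \<omega>) (X j \<omega>)) i} \<in> sets M"
proof (rule sets_Collect_finite_valued[where I = "{1..m}"])
  show "finite {1..m}" "finite ((\<lambda>c. (1 + real c) / (real n + 1)) ` {..n})"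
    by simp_all
  show "(\<lambda>\<omega>. conf_pval s n (\<lambda>l. cal l \<omega>) (X j \<omega>)) \<in> borel_measurable M" for j
    using assms(2,3,4) by (rule borel_measurable_conf_pval)
  show "conf_pval s n (\<lambda>l. cal l \<omega>) (X j \<omega>) \<in> (\<lambda>c. (1 + real c) / (real n + 1)) ` {..n}" for j \<omega>
    by (rule conf_pval_in_grid)
  show "mmdcp_accept \<alpha> n m f i = mmdcp_accept \<alpha> n m f' i"
    if "\<And>j. j \<in> {1..m} \<Longrightarrow> f j = f' j" for f f'
    using assms(1) that by (rule mmdcp_accept_cong)
qed

theorem corollary1:
  fixes M :: "'a measure"
    and F :: "nat \<Rightarrow> (real^'p) measure"
    and mu :: "nat \<Rightarrow> real^'p" and Sig :: "nat \<Rightarrow> real^'p^'p"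
    and ncnt :: "nat \<Rightarrow> nat"
    and Xtr :: "nat \<Rightarrow> nat \<Rightarrow> 'a \<Rightarrow> real^'p"
    and Xte :: "nat \<Rightarrow> 'a \<Rightarrow> real^'p"
    and K k m i :: nat and \<alpha> :: real
  assumes "prob_space M"
    and "k \<in> {1..K}" and "i \<in> {1..m}"
    and "0 < \<alpha>" and "\<alpha> < 1"
    and "\<And>c l. Xtr c l \<in> borel_measurable M"
    and "\<And>j. Xte j \<in> borel_measurable M"
    and "\<And>c. c \<in> {1..K} \<Longrightarrow> prob_space (F c)"
    and "\<And>c. c \<in> {1..K} \<Longrightarrow> sets (F c) = sets borel"
    and "\<And>c j. c \<in> {1..K} \<Longrightarrow> integrable (F c) (\<lambda>x. (x$j)^2)"
    and "\<And>c j. c \<in> {1..K} \<Longrightarrow> mu c $ j = (\<integral>x. x$j \<partial>F c)"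
    and "\<And>c a b. c \<in> {1..K} \<Longrightarrow>
           Sig c $ a $ b = (\<integral>x. (x$a - mu c $ a) * (x$b - mu c $ b) \<partial>F c)"
    and "\<And>c v. c \<in> {1..K} \<Longrightarrow> v \<noteq> 0 \<Longrightarrow> 0 < v \<bullet> (Sig c *v v)"
    and "exchangeable M (ncnt k + 1)
           (\<lambda>l. if l < ncnt k then Xtr k (Suc l) else Xte i)"
    and "distr M borel (Xte i) = F k"
  shows "measure M {\<omega> \<in> space M.
            k \<in> oracle_pred_set K \<alpha> mu Sig ncnt (\<lambda>c l. Xtr c l \<omega>) m (\<lambda>j. Xte j \<omega>) i}
         \<ge> 1 - \<alpha>"
proof -
  interpret prob_space M by fact
  define pv where "pv j \<omega> = conf_pval (oracle_score (mu k) (Sig k)) (ncnt k) (\<lambda>l. Xtr k l \<omega>) (Xte j \<omega>)"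
    for j \<omega>
  define thr where "thr = real_of_int \<lfloor>(real (ncnt k) + 1) * \<alpha>\<rfloor> / (real (ncnt k) + 1)"
  define E where "E = {\<omega>\<in>space M. mmdcp_accept \<alpha> (ncnt k) m (\<lambda>j. pv j \<omega>) i}"
  define L where "L = {\<omega>\<in>space M. pv i \<omega> \<le> thr}"
  have accepted_eq: "{\<omega> \<in> space M.
      k \<in> oracle_pred_set K \<alpha> mu Sig ncnt (\<lambda>c l. Xtr c l \<omega>) m (\<lambda>j. Xte j \<omega>) i} = E"
    using assms(2) by (simp add: E_def oracle_pred_set_def pv_def)
  have "E \<in> events"
    unfolding E_def pv_def using assms(3) borel_measurable_oracle_score assms(6,7)
    by (rule sets_mmdcp_accept_conf_pval)
  have "L \<in> events"
    unfolding L_def pv_def using assms(6,7) by measurable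
  have "space M - L \<subseteq> E"
    using mmdcp_accept_if_conf_pval_gt[OF assms(3)] by (auto simp: L_def E_def pv_def thr_def not_le)
  have "prob L \<le> \<alpha>"
    using conf_pval_valid[OF assms(1) _ assms(14) assms(6,7) borel_measurable_oracle_score] assms(4)
    by (simp add: L_def pv_def thr_def)
  then have "1 - \<alpha> \<le> prob (space M - L)"
    using prob_compl[OF \<open>L \<in> events\<close>] by simp
  also have "\<dots> \<le> prob E"
    using \<open>space M - L \<subseteq> E\<close> \<open>E \<in> events\<close> by (rule finite_measure_mono)
  finally show ?thesis
    unfolding accepted_eq .
qed

end
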